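(* If $G$ is a connected $(C_4,\text{diamond})$-free graph and $1\le k\le|V(G)|-1$, then $F_k(G)$ is a prime graph.
   Context: $F_k(G)$ is the graph on the $k$-subsets of $V(G)$ with $A,B$ adjacent iff $A\triangle B$ is an edge of $G$. A diamond is $K_4$ minus an edge; $(C_4,\text{diamond})$-free means no induced $4$-cycle and no induced diamond. A graph is composite if it is isomorphic to the Cartesian product of two or more nontrivial graphs, and prime otherwise. *)

theory Defs
  imports Main
begin

definition simple_graph :: "'a set \<Rightarrow> ('a \<Rightarrow> 'a \<Rightarrow> bool) \<Rightarrow> bool" where
  "simple_graph V E \<longleftrightarrow> finite V \<and>
     (\<forall>x y. E x y \<longrightarrow> x \<in> V \<and> y \<in> V \<and> x \<noteq> y) \<and>
     (\<forall>x y. E x y \<longrightarrow> E y x)"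

definition connected_graph :: "'a set \<Rightarrow> ('a \<Rightarrow> 'a \<Rightarrow> bool) \<Rightarrow> bool" where
  "connected_graph V E \<longleftrightarrow> V \<noteq> {} \<and> (\<forall>x\<in>V. \<forall>y\<in>V. E\<^sup>*\<^sup>* x y)"

definition C4_free :: "'a set \<Rightarrow> ('a \<Rightarrow> 'a \<Rightarrow> bool) \<Rightarrow> bool" where
  "C4_free V E \<longleftrightarrow> \<not> (\<exists>a\<in>V. \<exists>b\<in>V. \<exists>c\<in>V. \<exists>d\<in>V. distinct [a, b, c, d] \<and>
     E a b \<and> E b c \<and> E c d \<and> E d a \<and> \<not> E a c \<and> \<not> E b d)"

definition diamond_free :: "'a set \<Rightarrow> ('a \<Rightarrow> 'a \<Rightarrow> bool) \<Rightarrow> bool" where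
  "diamond_free V E \<longleftrightarrow> \<not> (\<exists>a\<in>V. \<exists>b\<in>V. \<exists>c\<in>V. \<exists>d\<in>V. distinct [a, b, c, d] \<and>
     E a b \<and> E a c \<and> E a d \<and> E b c \<and> E b d \<and> \<not> E c d)"

definition token_vertices :: "'a set \<Rightarrow> nat \<Rightarrow> 'a set set" where
  "token_vertices V k = {A. A \<subseteq> V \<and> card A = k}"

definition token_edges :: "'a set \<Rightarrow> ('a \<Rightarrow> 'a \<Rightarrow> bool) \<Rightarrow> nat \<Rightarrow> 'a set \<Rightarrow> 'a set \<Rightarrow> bool" where
  "token_edges V E k A B \<longleftrightarrow> A \<in> token_vertices V k \<and> B \<in> token_vertices V k \<and>
     (\<exists>a b. (A - B) \<union> (B - A) = {a, b} \<and> E a b)"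

definition cart_edges :: "('a \<Rightarrow> 'a \<Rightarrow> bool) \<Rightarrow> ('b \<Rightarrow> 'b \<Rightarrow> bool) \<Rightarrow> 'a \<times> 'b \<Rightarrow> 'a \<times> 'b \<Rightarrow> bool" where
  "cart_edges E1 E2 p q \<longleftrightarrow> (fst p = fst q \<and> E2 (snd p) (snd q)) \<or> (snd p = snd q \<and> E1 (fst p) (fst q))"

definition graph_iso :: "'a set \<Rightarrow> ('a \<Rightarrow> 'a \<Rightarrow> bool) \<Rightarrow> 'b set \<Rightarrow> ('b \<Rightarrow> 'b \<Rightarrow> bool) \<Rightarrow> bool" where
  "graph_iso V E W F \<longleftrightarrow> (\<exists>f. bij_betw f V W \<and> (\<forall>x\<in>V. \<forall>y\<in>V. E x y \<longleftrightarrow> F (f x) (f y)))"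

definition nontrivial_graph :: "'a set \<Rightarrow> ('a \<Rightarrow> 'a \<Rightarrow> bool) \<Rightarrow> bool" where
  "nontrivial_graph V E \<longleftrightarrow> simple_graph V E \<and> card V \<ge> 2"

text \<open>Composite: isomorphic to the Cartesian product of two nontrivial (finite simple)
graphs (a product of two or more nontrivial factors is a product of two nontrivial
factors). Since all graphs are finite, factors are taken, w.l.o.g., with vertices in nat.\<close>
definition composite_graph :: "'a set \<Rightarrow> ('a \<Rightarrow> 'a \<Rightarrow> bool) \<Rightarrow> bool" where
  "composite_graph V E \<longleftrightarrow> (\<exists>(V1::nat set) E1 (V2::nat set) E2.
     nontrivial_graph V1 E1 \<and> nontrivial_graph V2 E2 \<and>
     graph_iso V E (V1 \<times> V2) (cart_edges E1 E2))"

definition prime_graph :: "'a set \<Rightarrow> ('a \<Rightarrow> 'a \<Rightarrow> bool) \<Rightarrow> bool" where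
  "prime_graph V E \<longleftrightarrow> \<not> composite_graph V E"

end

theory Submission
  imports Defs
begin

text \<open>Suppose \<open>F\<^sub>k(G)\<close> were a Cartesian product of two nontrivial graphs and label each
  edge by the factor in which it moves. In a product, a triangle is single-labelled, two edges
  at a vertex with different labels lie in a square, and opposite edges of a 4-cycle carry the
  same label. In the token graph, two moves at \<open>A\<close> sharing a vertex of \<open>G\<close> lead to sets
  \<open>D + p\<close> and \<open>D + q\<close> which are either adjacent (a triangle) or whose common neighbours
  correspond to common neighbours of the non-adjacent vertices \<open>p\<close>, \<open>q\<close> of \<open>G\<close>. As \<open>G\<close> is
  (C4, diamond)-free, \<open>A\<close> is the only one, so no square exists and both moves carry the same
  label. Following paths of \<open>G\<close>, with commuting moves transporting labels across squares,
  all edges at \<open>A\<close> get the same label, and since \<open>F\<^sub>k(G)\<close> is connected so do all its edges,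
  contradicting that both factors are nontrivial.\<close>

lemma simple_graph_sym: "simple_graph V E \<Longrightarrow> E x y \<Longrightarrow> E y x"
  unfolding simple_graph_def by blast

lemma simple_graph_irrefl: "simple_graph V E \<Longrightarrow> E x y \<Longrightarrow> x \<noteq> y"
  unfolding simple_graph_def by blast

lemma simple_graph_edge_verts: "simple_graph V E \<Longrightarrow> E x y \<Longrightarrow> x \<in> V \<and> y \<in> V"
  unfolding simple_graph_def by blast

section \<open>Token graphs\<close>

lemma card_Diff_commute:
  assumes "finite A" "finite B" "card A = card B"
  shows "card (A - B) = card (B - A)"
  using assms by (simp add: card_Diff_subset_Int Int_commute)

lemma token_edges_sym: "simple_graph V E \<Longrightarrow> token_edges V E k A B \<Longrightarrow> token_edges V E k B A"
  unfolding token_edges_def by (metis Un_commute insert_commute simple_graph_sym)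

lemma token_edges_irrefl: "\<not> token_edges V E k A A"
  unfolding token_edges_def by auto

lemma token_edges_moveI:
  assumes "simple_graph V E" "A \<in> token_vertices V k" "a \<in> A" "b \<notin> A" "E a b"
  shows "token_edges V E k A (insert b (A - {a}))" "insert b (A - {a}) \<in> token_vertices V k"
proof -
  have "finite A" "A \<subseteq> V" "card A = k"
    using assms(1,2) finite_subset unfolding simple_graph_def token_vertices_def by auto
  moreover have "b \<in> V"
    using simple_graph_edge_verts[OF assms(1,5)] by blast
  ultimately show B: "insert b (A - {a}) \<in> token_vertices V k"
    using assms(3,4) card_Suc_Diff1 unfolding token_vertices_def by fastforce
  have "(A - insert b (A - {a})) \<union> (insert b (A - {a}) - A) = {a, b}"
    using assms(3,4) by auto
  then show "token_edges V E k A (insert b (A - {a}))"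
    using B assms(2,5) unfolding token_edges_def by blast
qed

lemma token_edgesE:
  assumes "simple_graph V E" "token_edges V E k A B"
  obtains a b where "a \<in> A" "b \<notin> A" "E a b" "B = insert b (A - {a})"
proof -
  obtain x y where xy: "(A - B) \<union> (B - A) = {x, y}" "E x y"
    and "A \<in> token_vertices V k" "B \<in> token_vertices V k"
    using assms(2) unfolding token_edges_def by blast
  then have "finite A" "finite B" "card A = card B"
    using assms(1) finite_subset unfolding simple_graph_def token_vertices_def by auto
  then have "card (A - B) = card (B - A)" by (rule card_Diff_commute)
  moreover have "card (A - B) + card (B - A) = 2"
  proof -
    have "card ((A - B) \<union> (B - A)) = 2"
      using xy simple_graph_irrefl[OF assms(1) xy(2)] by simp
    then show ?thesis
      using \<open>finite A\<close> \<open>finite B\<close> by (subst (asm) card_Un_disjoint) auto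
  qed
  ultimately have "card (A - B) = 1" "card (B - A) = 1" by simp_all
  then obtain u v where u: "A - B = {u}" and v: "B - A = {v}"
    by (meson card_1_singletonE)
  have "B = insert v (A - {u})" using u v by blast
  moreover have "E u v"
  proof -
    have "{u, v} = {x, y}" using xy(1) u v by auto
    then show ?thesis
      using xy(2) simple_graph_sym[OF assms(1)] by (auto simp: doubleton_eq_iff)
  qed
  ultimately show thesis using that u v by blast
qed

lemma token_edges_vertices:
  "token_edges V E k A B \<Longrightarrow> A \<in> token_vertices V k \<and> B \<in> token_vertices V k"
  unfolding token_edges_def by blast

lemma token_reachable_vertices:
  "(token_edges V E k)\<^sup>*\<^sup>* A B \<Longrightarrow> A \<in> token_vertices V k \<Longrightarrow> B \<in> token_vertices V k"
  by (induction rule: rtranclp_induct) (auto dest: token_edges_vertices)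

text \<open>A token travels along a path of \<open>G\<close>; tokens met on the way are moved first,
  each one step further along the path.\<close>
lemma token_move_along_path:
  assumes sg: "simple_graph V E" and path: "E\<^sup>*\<^sup>* x y"
  shows "A \<in> token_vertices V k \<Longrightarrow> x \<in> A \<Longrightarrow> y \<notin> A \<Longrightarrow>
    (token_edges V E k)\<^sup>*\<^sup>* A (insert y (A - {x}))"
  using path
proof (induction arbitrary: A rule: converse_rtranclp_induct)
  case base
  then show ?case by simp
next
  case (step x z)
  have "x \<noteq> z" using simple_graph_irrefl[OF sg step.hyps(1)] .
  show ?case
  proof (cases "z \<in> A")
    case True
    define A' where "A' = insert y (A - {z})"
    have "(token_edges V E k)\<^sup>*\<^sup>* A A'"
      unfolding A'_def using step.IH[OF step.prems(1) True step.prems(3)] .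
    moreover have "token_edges V E k A' (insert z (A' - {x}))"
    proof (rule token_edges_moveI(1)[OF sg _ _ _ step.hyps(1)])
      show "A' \<in> token_vertices V k"
        using calculation step.prems(1) token_reachable_vertices by blast
      show "x \<in> A'" "z \<notin> A'"
        unfolding A'_def using True step.prems \<open>x \<noteq> z\<close> by auto
    qed
    moreover have "insert z (A' - {x}) = insert y (A - {x})"
      unfolding A'_def using True step.prems \<open>x \<noteq> z\<close> by auto
    ultimately show ?thesis by simp
  next
    case False
    define A' where "A' = insert z (A - {x})"
    note first_move = token_edges_moveI[OF sg step.prems(1,2) False step.hyps(1), folded A'_def]
    show ?thesis
    proof (cases "z = y")
      case True
      then show ?thesis using first_move(1) unfolding A'_def by (simp add: r_into_rtranclp)
    next
      case False
      have "(token_edges V E k)\<^sup>*\<^sup>* A' (insert y (A' - {z}))"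
        using step.IH[OF first_move(2)] step.prems(3) False unfolding A'_def by simp
      moreover have "insert y (A' - {z}) = insert y (A - {x})"
        unfolding A'_def using \<open>z \<notin> A\<close> by auto
      ultimately show ?thesis
        using first_move(1) by (simp add: converse_rtranclp_into_rtranclp)
    qed
  qed
qed

lemma token_graph_connected:
  assumes sg: "simple_graph V E" and conn: "connected_graph V E"
    and "A \<in> token_vertices V k" "B \<in> token_vertices V k"
  shows "(token_edges V E k)\<^sup>*\<^sup>* A B"
  using assms(3,4)
proof (induction "card (A - B)" arbitrary: A rule: less_induct)
  case less
  have "finite A" "finite B" "card A = card B" "A \<subseteq> V" "B \<subseteq> V"
    using less.prems sg finite_subset unfolding simple_graph_def token_vertices_def by auto
  show ?case
  proof (cases "A = B")
    case True
    then show ?thesis by simp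
  next
    case False
    have "card (A - B) = card (B - A)"
      using card_Diff_commute \<open>finite A\<close> \<open>finite B\<close> \<open>card A = card B\<close> .
    moreover have "A - B \<noteq> {} \<or> B - A \<noteq> {}" using False by blast
    ultimately have "A - B \<noteq> {}" "B - A \<noteq> {}"
      using \<open>finite A\<close> \<open>finite B\<close> by (metis card_0_eq finite_Diff)+
    then obtain a b where a: "a \<in> A" "a \<notin> B" and b: "b \<in> B" "b \<notin> A"
      by blast
    define A' where "A' = insert b (A - {a})"
    have "E\<^sup>*\<^sup>* a b"
      using conn a b \<open>A \<subseteq> V\<close> \<open>B \<subseteq> V\<close> unfolding connected_graph_def by blast
    then have "(token_edges V E k)\<^sup>*\<^sup>* A A'"
      unfolding A'_def using token_move_along_path[OF sg] less.prems(1) a b by blast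
    moreover have "(token_edges V E k)\<^sup>*\<^sup>* A' B"
    proof (rule less.hyps)
      show "A' \<in> token_vertices V k"
        using calculation less.prems(1) token_reachable_vertices by blast
      have "A' - B = (A - B) - {a}" unfolding A'_def using b by auto
      then show "card (A' - B) < card (A - B)"
        using a \<open>finite A\<close> by (metis DiffI card_Diff1_less finite_Diff)
    qed (rule less.prems(2))
    ultimately show ?thesis by simp
  qed
qed

section \<open>Common neighbours in (C4, diamond)-free graphs\<close>

lemma C4_diamond_free_common_neighbour_unique:
  assumes sg: "simple_graph V E" and "C4_free V E" "diamond_free V E"
    and "p \<noteq> q" "\<not> E p q" "E u p" "E u q" "E w p" "E w q"
  shows "u = w"
proof (rule ccontr)
  assume "u \<noteq> w"
  have in_V: "u \<in> V" "w \<in> V" "p \<in> V" "q \<in> V"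
    using simple_graph_edge_verts[OF sg] assms(6,9) by blast+
  have "distinct [u, w, p, q]"
    using \<open>u \<noteq> w\<close> assms(4,6-9) simple_graph_irrefl[OF sg] by auto
  show False
  proof (cases "E u w")
    case True
    then show False
      using \<open>diamond_free V E\<close> in_V \<open>distinct [u, w, p, q]\<close> assms(5-9)
      unfolding diamond_free_def by blast
  next
    case False
    have "distinct [u, p, w, q]" using \<open>distinct [u, w, p, q]\<close> by auto
    moreover have "E p w" "E q u" using assms(7,8) simple_graph_sym[OF sg] by blast+
    ultimately show False
      using \<open>C4_free V E\<close> in_V False assms(5,6,9) unfolding C4_free_def by blast
  qed
qed

lemma token_common_neighbourE:
  assumes sg: "simple_graph V E" and "p \<notin> D" "q \<notin> D" "p \<noteq> q"
    and XB: "token_edges V E k X (insert p D)" and XC: "token_edges V E k X (insert q D)"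
  obtains (shift) z where "z \<notin> D" "X = insert z D" "E z p" "E z q"
    | (swap) w where "w \<in> D" "X = insert p (insert q (D - {w}))" "E w p" "E w q"
proof -
  obtain u v where uv: "u \<in> insert p D" "v \<notin> insert p D" "E u v"
    and X: "X = insert v (insert p D - {u})"
    using token_edgesE[OF sg token_edges_sym[OF sg XB]] by blast
  obtain s t where "E s t" and X': "X = insert t (insert q D - {s})"
    using token_edgesE[OF sg token_edges_sym[OF sg XC]] by blast
  have X_minus_C: "r = t" if "r \<in> X" "r \<notin> insert q D" for r
    using that unfolding X' by blast
  have C_minus_X: "r = s" if "r \<in> insert q D" "r \<notin> X" for r
    using that unfolding X' by blast
  show thesis
  proof (cases "u = p")
    case True
    then have "X = insert v D" using X \<open>p \<notin> D\<close> by auto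
    have "v \<noteq> q"
      using XC token_edges_irrefl \<open>X = insert v D\<close> by blast
    then have "v = t" "q = s"
      using X_minus_C[of v] C_minus_X[of q] uv(2) \<open>q \<notin> D\<close> \<open>X = insert v D\<close> by auto
    then show thesis
      using shift[of v] \<open>X = insert v D\<close> uv \<open>E s t\<close> True simple_graph_sym[OF sg] by blast
  next
    case False
    then have "u \<in> D" using uv(1) by simp
    have "p = t" using X_minus_C[of p] \<open>p \<notin> D\<close> \<open>p \<noteq> q\<close> False unfolding X by blast
    have "v = q" using X_minus_C[of v] uv(2) \<open>p = t\<close> unfolding X by blast
    have "u = s" using C_minus_X[of u] uv(2) \<open>u \<in> D\<close> False unfolding X by blast
    have "X = insert p (insert q (D - {u}))" using X \<open>v = q\<close> False by auto
    then show thesis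
      using swap[of u] \<open>u \<in> D\<close> \<open>E s t\<close> \<open>p = t\<close> \<open>u = s\<close> uv(3) \<open>v = q\<close> by blast
  qed
qed

lemma token_common_neighbour_unique:
  assumes sg: "simple_graph V E" and "C4_free V E" "diamond_free V E"
    and "p \<notin> D" "q \<notin> D" "p \<noteq> q" "\<not> E p q"
    and "token_edges V E k X (insert p D)" "token_edges V E k X (insert q D)"
    and "token_edges V E k Y (insert p D)" "token_edges V E k Y (insert q D)"
  shows "X = Y"
proof -
  have centre: "\<exists>c. E c p \<and> E c q \<and>
      Z = (if c \<in> D then insert p (insert q (D - {c})) else insert c D)"
    if "token_edges V E k Z (insert p D)" "token_edges V E k Z (insert q D)" for Z
    by (rule token_common_neighbourE[OF sg assms(4-6) that]) auto
  obtain x where x: "E x p" "E x q"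
    and X: "X = (if x \<in> D then insert p (insert q (D - {x})) else insert x D)"
    using centre[OF assms(8,9)] by blast
  obtain y where y: "E y p" "E y q"
    and Y: "Y = (if y \<in> D then insert p (insert q (D - {y})) else insert y D)"
    using centre[OF assms(10,11)] by blast
  have "x = y"
    using C4_diamond_free_common_neighbour_unique[OF assms(1-3,6,7) x y] .
  then show ?thesis using X Y by simp
qed

section \<open>Edge labels of a Cartesian product\<close>

locale cartesian_factorization =
  fixes H :: "'v set" and T :: "'v \<Rightarrow> 'v \<Rightarrow> bool"
    and V1 :: "'b set" and E1 :: "'b \<Rightarrow> 'b \<Rightarrow> bool"
    and V2 :: "'c set" and E2 :: "'c \<Rightarrow> 'c \<Rightarrow> bool"
    and f :: "'v \<Rightarrow> 'b \<times> 'c"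
  assumes bij: "bij_betw f H (V1 \<times> V2)"
    and edges_iff: "\<And>A B. A \<in> H \<Longrightarrow> B \<in> H \<Longrightarrow> T A B \<longleftrightarrow> cart_edges E1 E2 (f A) (f B)"
    and edges_in: "\<And>A B. T A B \<Longrightarrow> A \<in> H \<and> B \<in> H"
    and simple1: "simple_graph V1 E1" and simple2: "simple_graph V2 E2"
begin

definition first_factor_edge :: "'v \<Rightarrow> 'v \<Rightarrow> bool" where
  "first_factor_edge A B \<longleftrightarrow> fst (f A) \<noteq> fst (f B)"

lemma first_factor_edge_sym: "first_factor_edge A B = first_factor_edge B A"
  unfolding first_factor_edge_def by auto

lemma edge_cart_edges: "T A B \<Longrightarrow> cart_edges E1 E2 (f A) (f B)"
  using edges_iff[of A B] edges_in[of A B] by blast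

lemma edges_sym:
  assumes "T A B"
  shows "T B A"
proof -
  have "cart_edges E1 E2 (f B) (f A)"
    using edge_cart_edges[OF assms] simple_graph_sym[OF simple1, of "fst (f A)" "fst (f B)"]
      simple_graph_sym[OF simple2, of "snd (f A)" "snd (f B)"]
    unfolding cart_edges_def by auto
  then show ?thesis using edges_iff[of B A] edges_in[OF assms] by blast
qed

lemma edge_changes_one_coordinate:
  assumes "T A B"
  shows "fst (f A) \<noteq> fst (f B) \<and> snd (f A) = snd (f B) \<or>
    fst (f A) = fst (f B) \<and> snd (f A) \<noteq> snd (f B)"
  using edge_cart_edges[OF assms] simple_graph_irrefl[OF simple1] simple_graph_irrefl[OF simple2]
  unfolding cart_edges_def by auto

lemma vertex_with_coordinates:
  assumes "z \<in> V1 \<times> V2"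
  obtains A where "A \<in> H" "f A = z"
  using assms bij_betw_imp_surj_on[OF bij] by (metis imageE)

lemma triangle_same_factor:
  assumes "T A P" "T A Q" "T P Q"
  shows "first_factor_edge A P = first_factor_edge A Q"
  using edge_changes_one_coordinate[OF assms(1)] edge_changes_one_coordinate[OF assms(2)]
    edge_changes_one_coordinate[OF assms(3)]
  unfolding first_factor_edge_def by auto

lemma four_cycle_opposite_same_factor:
  assumes "T A P" "T P Y" "T Y Q" "T Q A" "A \<noteq> Y" "P \<noteq> Q"
  shows "first_factor_edge A P = first_factor_edge Q Y"
proof -
  have "f A \<noteq> f Y" "f P \<noteq> f Q"
    using assms(5,6) edges_in[OF assms(1)] edges_in[OF assms(3)] bij
    unfolding bij_betw_def inj_on_def by blast+
  then show ?thesis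
    using edge_changes_one_coordinate[OF assms(1)] edge_changes_one_coordinate[OF assms(2)]
      edge_changes_one_coordinate[OF assms(3)] edge_changes_one_coordinate[OF assms(4)]
    unfolding first_factor_edge_def by (cases "f A"; cases "f P"; cases "f Q"; cases "f Y") auto
qed

lemma square_completion:
  assumes "T A P" "T A Q" "first_factor_edge A P \<noteq> first_factor_edge A Q"
  obtains Y where "Y \<noteq> A" "T Y P" "T Y Q"
proof -
  have "\<exists>Y. Y \<noteq> A \<and> T Y P \<and> T Y Q"
    if AP: "T A P" "first_factor_edge A P" and AQ: "T A Q" "\<not> first_factor_edge A Q" for P Q
  proof -
    have P: "fst (f A) \<noteq> fst (f P)" "snd (f A) = snd (f P)" "E1 (fst (f A)) (fst (f P))"
      using AP edge_changes_one_coordinate[OF AP(1)] edge_cart_edges[OF AP(1)]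
      unfolding first_factor_edge_def cart_edges_def by auto
    have Q: "fst (f A) = fst (f Q)" "snd (f A) \<noteq> snd (f Q)" "E2 (snd (f A)) (snd (f Q))"
      using AQ edge_changes_one_coordinate[OF AQ(1)] edge_cart_edges[OF AQ(1)]
      unfolding first_factor_edge_def cart_edges_def by auto
    have "(fst (f P), snd (f Q)) \<in> V1 \<times> V2"
      using edges_in[OF AP(1)] edges_in[OF AQ(1)] bij_betw_apply[OF bij]
      by (auto simp: mem_Times_iff)
    then obtain Y where Y: "Y \<in> H" "f Y = (fst (f P), snd (f Q))"
      by (rule vertex_with_coordinates)
    have "cart_edges E1 E2 (f Y) (f P)"
      using Y(2) P(2) Q(3) simple_graph_sym[OF simple2, of "snd (f A)" "snd (f Q)"]
      unfolding cart_edges_def by simp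
    moreover have "cart_edges E1 E2 (f Y) (f Q)"
      using Y(2) P(3) Q(1) simple_graph_sym[OF simple1, of "fst (f A)" "fst (f P)"]
      unfolding cart_edges_def by simp
    moreover have "Y \<noteq> A" using Y(2) P(1) Q(1) by auto
    ultimately show ?thesis
      using Y(1) edges_in[OF AP(1)] edges_in[OF AQ(1)] edges_iff[of Y P] edges_iff[of Y Q] by blast
  qed
  then show thesis
    using assms that by (cases "first_factor_edge A P") auto
qed

lemma fst_constant_along_path:
  assumes "T\<^sup>*\<^sup>* A B" "\<And>P Q. T P Q \<Longrightarrow> \<not> first_factor_edge P Q"
  shows "fst (f A) = fst (f B)"
  using assms(1) by induction (auto dest: assms(2) simp: first_factor_edge_def)

lemma snd_constant_along_path:
  assumes "T\<^sup>*\<^sup>* A B" "\<And>P Q. T P Q \<Longrightarrow> first_factor_edge P Q"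
  shows "snd (f A) = snd (f B)"
  using assms(1)
proof induction
  case (step B C)
  then show ?case
    using assms(2) edge_changes_one_coordinate unfolding first_factor_edge_def by metis
qed simp

lemma edges_of_both_factors:
  assumes "nontrivial_graph V1 E1" "nontrivial_graph V2 E2"
    and connected: "\<And>A B. A \<in> H \<Longrightarrow> B \<in> H \<Longrightarrow> T\<^sup>*\<^sup>* A B"
  obtains A B A' B' where "T A B" "first_factor_edge A B" "T A' B'" "\<not> first_factor_edge A' B'"
proof -
  have "\<exists>x y. x \<in> V \<and> y \<in> V \<and> x \<noteq> y" if "nontrivial_graph V E" for V :: "'d set" and E
    using that unfolding nontrivial_graph_def simple_graph_def
    by (metis One_nat_def card_le_Suc0_iff_eq not_less_eq_eq numeral_2_eq_2)
  then obtain x1 y1 x2 y2 where "x1 \<in> V1" "y1 \<in> V1" "x1 \<noteq> y1" "x2 \<in> V2" "y2 \<in> V2" "x2 \<noteq> y2"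
    using assms(1,2) by meson
  then obtain X Y Z where "X \<in> H" "f X = (x1, x2)" "Y \<in> H" "f Y = (y1, x2)" "Z \<in> H" "f Z = (x1, y2)"
    by (metis mem_Times_iff fst_conv snd_conv vertex_with_coordinates)
  then have "fst (f X) \<noteq> fst (f Y)" "snd (f X) \<noteq> snd (f Z)" "T\<^sup>*\<^sup>* X Y" "T\<^sup>*\<^sup>* X Z"
    using \<open>x1 \<noteq> y1\<close> \<open>x2 \<noteq> y2\<close> connected by auto
  then show thesis
    using that fst_constant_along_path snd_constant_along_path by blast
qed

lemma first_factor_edge_constant:
  assumes connected: "\<And>A B. A \<in> H \<Longrightarrow> B \<in> H \<Longrightarrow> T\<^sup>*\<^sup>* A B"
    and local: "\<And>A B C. T A B \<Longrightarrow> T A C \<Longrightarrow> first_factor_edge A B = first_factor_edge A C"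
    and "T A B" "T A' B'"
  shows "first_factor_edge A B = first_factor_edge A' B'"
proof -
  have "T\<^sup>*\<^sup>* A A'" using connected edges_in assms(3,4) by blast
  then show ?thesis
    using assms(4)
  proof (induction arbitrary: B' rule: rtranclp_induct)
    case base
    then show ?case using local assms(3) by blast
  next
    case (step X X')
    have "first_factor_edge A B = first_factor_edge X X'" using step.IH step.hyps(2) .
    also have "\<dots> = first_factor_edge X' X" by (rule first_factor_edge_sym)
    also have "\<dots> = first_factor_edge X' B'" using local edges_sym step.hyps(2) step.prems by blast
    finally show ?case .
  qed
qed

end

section \<open>Factorizations of token graphs\<close>

locale token_graph_factorization =
  cartesian_factorization "token_vertices V k" "token_edges V E k" V1 E1 V2 E2 f
  for V :: "'a set" and E k and V1 :: "'b set" and E1 and V2 :: "'c set" and E2 and f +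
  assumes simple: "simple_graph V E" and no_C4: "C4_free V E" and no_diamond: "diamond_free V E"
begin

lemma swapped_moves_same_factor:
  assumes AP: "token_edges V E k A (insert p D)" and AQ: "token_edges V E k A (insert q D)"
    and "p \<notin> D" "q \<notin> D"
  shows "first_factor_edge A (insert p D) = first_factor_edge A (insert q D)"
proof (rule ccontr)
  assume differ: "first_factor_edge A (insert p D) \<noteq> first_factor_edge A (insert q D)"
  then have "p \<noteq> q" by auto
  have "\<not> E p q"
  proof
    assume "E p q"
    moreover have "insert p D \<in> token_vertices V k" using token_edges_vertices[OF AP] by blast
    moreover have "insert q (insert p D - {p}) = insert q D" using \<open>p \<notin> D\<close> by auto
    ultimately have "token_edges V E k (insert p D) (insert q D)"
      using token_edges_moveI(1)[OF simple, of "insert p D" k p q] \<open>q \<notin> D\<close> \<open>p \<noteq> q\<close> by auto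
    then show False using triangle_same_factor[OF AP AQ] differ by blast
  qed
  obtain Y where "Y \<noteq> A" "token_edges V E k Y (insert p D)" "token_edges V E k Y (insert q D)"
    using square_completion[OF AP AQ differ] .
  then show False
    using token_common_neighbour_unique[OF simple no_C4 no_diamond assms(3,4) \<open>p \<noteq> q\<close>
        \<open>\<not> E p q\<close> AP AQ]
    by blast
qed

lemma moves_sharing_vertex_same_factor:
  assumes "A \<in> token_vertices V k" "a \<in> A" "b \<notin> A" "E a b" "c \<in> A" "d \<notin> A" "E c d"
    and "a = c \<or> b = d"
  shows "first_factor_edge A (insert b (A - {a})) = first_factor_edge A (insert d (A - {c}))"
proof (cases "a = c")
  case True
  then show ?thesis
    using swapped_moves_same_factor token_edges_moveI(1)[OF simple assms(1)] assms(2-7) by simp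
next
  case False
  define D where "D = insert b (A - {a, c})"
  have "insert b (A - {a}) = insert c D" "insert d (A - {c}) = insert a D"
    using False assms(2,3,5,8) unfolding D_def by auto
  moreover have "c \<notin> D" "a \<notin> D" using False assms(2,3,5,8) unfolding D_def by auto
  ultimately show ?thesis
    using swapped_moves_same_factor token_edges_moveI(1)[OF simple assms(1)] assms(2-7) by metis
qed

lemma commuting_moves_same_factor:
  assumes A: "A \<in> token_vertices V k"
    and ab: "a \<in> A" "b \<notin> A" "E a b" and cd: "c \<in> A" "d \<notin> A" "E c d"
    and "a \<noteq> c" "b \<noteq> d"
  shows "first_factor_edge A (insert b (A - {a})) =
    first_factor_edge (insert d (A - {c})) (insert b (insert d (A - {c}) - {a}))"
proof -
  define P where "P = insert b (A - {a})"
  define Q where "Q = insert d (A - {c})"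
  define Y where "Y = insert b (Q - {a})"
  note move = token_edges_moveI[OF simple]
  have AP: "token_edges V E k A P" "P \<in> token_vertices V k"
    unfolding P_def using move[OF A ab] by auto
  have AQ: "token_edges V E k A Q" "Q \<in> token_vertices V k"
    unfolding Q_def using move[OF A cd] by auto
  have "token_edges V E k Q Y"
    unfolding Y_def using move(1)[OF AQ(2) _ _ ab(3)] ab cd assms(8,9) unfolding Q_def by auto
  moreover have "Y = insert d (P - {c})"
    unfolding Y_def P_def Q_def using ab cd assms(8,9) by auto
  then have "token_edges V E k P Y"
    using move(1)[OF AP(2) _ _ cd(3)] ab cd assms(8,9) unfolding P_def by auto
  moreover have "A \<noteq> Y" "P \<noteq> Q" unfolding Y_def P_def Q_def using ab assms(9) by auto
  ultimately have "first_factor_edge A P = first_factor_edge Q Y"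
    using four_cycle_opposite_same_factor AP(1) AQ(1) edges_sym by blast
  then show ?thesis unfolding P_def Q_def Y_def .
qed

text \<open>Induction along a path of \<open>G\<close> from an end of the move \<open>(a, b)\<close> to an end of
  \<open>(c, d)\<close>. When the next vertex \<open>p\<close> of the path does not fit a move at \<open>A\<close> sharing a vertex
  with \<open>(a, b)\<close>, it fits one at \<open>A - a + b\<close> sharing a vertex with the reverse move \<open>(b, a)\<close>,
  and the commuting square carries the result back to \<open>A\<close>.\<close>
lemma moves_same_factor_along_path:
  assumes "E\<^sup>*\<^sup>* x y" "y \<in> {c, d}" "E c d"
  shows "A \<in> token_vertices V k \<Longrightarrow> a \<in> A \<Longrightarrow> b \<notin> A \<Longrightarrow> E a b \<Longrightarrow> c \<in> A \<Longrightarrow> d \<notin> A \<Longrightarrow>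
    x \<in> {a, b} \<Longrightarrow>
    first_factor_edge A (insert b (A - {a})) = first_factor_edge A (insert d (A - {c}))"
  using assms(1)
proof (induction arbitrary: A a b rule: converse_rtranclp_induct)
  case base
  then have "a = c \<or> b = d" using assms(2) by auto
  then show ?case using moves_sharing_vertex_same_factor base.prems assms(3) by blast
next
  case (step x p)
  have fits: "first_factor_edge B (insert v (B - {u})) = first_factor_edge B (insert d (B - {c}))"
    if B: "B \<in> token_vertices V k" "u \<in> B" "v \<notin> B" "E u v" "c \<in> B" "d \<notin> B"
      and "x = u \<and> p \<notin> B \<or> x = v \<and> p \<in> B" for B u v
  proof (cases "x = u \<and> p \<notin> B")
    case True
    then have "first_factor_edge B (insert v (B - {u})) = first_factor_edge B (insert p (B - {u}))"
      using moves_sharing_vertex_same_factor[OF B(1-4), of u p] True step.hyps(1) B(2) by auto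
    also have "\<dots> = first_factor_edge B (insert d (B - {c}))"
      using step.IH[OF B(1,2) _ _ B(5,6)] True step.hyps(1) by auto
    finally show ?thesis .
  next
    case False
    then have "x = v" "p \<in> B" using that(7) by auto
    then have "first_factor_edge B (insert v (B - {u})) = first_factor_edge B (insert v (B - {p}))"
      using moves_sharing_vertex_same_factor[OF B(1-4) \<open>p \<in> B\<close> B(3)] step.hyps(1)
        simple_graph_sym[OF simple, of v p] by blast
    also have "\<dots> = first_factor_edge B (insert d (B - {c}))"
      using step.IH[OF B(1) \<open>p \<in> B\<close> B(3) _ B(5,6)] \<open>x = v\<close> step.hyps(1)
        simple_graph_sym[OF simple] by blast
    finally show ?thesis .
  qed
  show ?case
  proof (cases "a = c \<or> b = d")
    case True
    then show ?thesis using moves_sharing_vertex_same_factor step.prems assms(3) by blast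
  next
    case False
    show ?thesis
    proof (cases "x = a \<and> p \<notin> A \<or> x = b \<and> p \<in> A")
      case True
      then show ?thesis using fits step.prems by blast
    next
      case False
      define A' where "A' = insert b (A - {a})"
      have A': "A' \<in> token_vertices V k" "b \<in> A'" "a \<notin> A'" "E b a" "c \<in> A'" "d \<notin> A'"
        using token_edges_moveI(2)[OF simple step.prems(1-4)] step.prems \<open>\<not> (a = c \<or> b = d)\<close>
          simple_graph_sym[OF simple] unfolding A'_def by auto
      have "x = b \<and> p \<notin> A' \<or> x = a \<and> p \<in> A'"
        using False step.prems(7) step.hyps(1) simple_graph_irrefl[OF simple]
        unfolding A'_def by auto
      then have "first_factor_edge A' (insert a (A' - {b})) =
          first_factor_edge A' (insert d (A' - {c}))"
        using fits[OF A'] by blast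
      moreover have "insert a (A' - {b}) = A" unfolding A'_def using step.prems(2,3) by auto
      moreover have "first_factor_edge A (insert d (A - {c})) =
          first_factor_edge A' (insert d (A' - {c}))"
        unfolding A'_def
        using commuting_moves_same_factor[OF step.prems(1,5,6) assms(3) step.prems(2-4)]
          \<open>\<not> (a = c \<or> b = d)\<close>
        by auto
      ultimately show ?thesis
        using first_factor_edge_sym[of A A'] unfolding A'_def by simp
    qed
  qed
qed

lemma incident_edges_same_factor:
  assumes "connected_graph V E" "token_edges V E k A B" "token_edges V E k A C"
  shows "first_factor_edge A B = first_factor_edge A C"
proof -
  obtain a b where ab: "a \<in> A" "b \<notin> A" "E a b" "B = insert b (A - {a})"
    using token_edgesE[OF simple assms(2)] .
  obtain c d where cd: "c \<in> A" "d \<notin> A" "E c d" "C = insert d (A - {c})"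
    using token_edgesE[OF simple assms(3)] .
  have "E\<^sup>*\<^sup>* a c"
    using assms(1) simple_graph_edge_verts[OF simple] ab(3) cd(3)
    unfolding connected_graph_def by blast
  then show ?thesis
    using moves_same_factor_along_path[of a c c d A a b] token_edges_vertices[OF assms(2)] ab cd
    by auto
qed

end

theorem corollary27:
  fixes V :: "'a set" and E :: "'a \<Rightarrow> 'a \<Rightarrow> bool" and k :: nat
  assumes "simple_graph V E"
    and "connected_graph V E"
    and "C4_free V E"
    and "diamond_free V E"
    and "1 \<le> k" and "k \<le> card V - 1"
  shows "prime_graph (token_vertices V k) (token_edges V E k)"
proof -
  have False
    if factors: "nontrivial_graph V1 E1" "nontrivial_graph V2 E2"
      and iso: "bij_betw f (token_vertices V k) (V1 \<times> V2)"
      and adjacency: "\<forall>A\<in>token_vertices V k. \<forall>B\<in>token_vertices V k.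
        token_edges V E k A B \<longleftrightarrow> cart_edges E1 E2 (f A) (f B)"
    for V1 V2 :: "nat set" and E1 E2 f
  proof -
    interpret token_graph_factorization V E k V1 E1 V2 E2 f
      by unfold_locales (use factors iso adjacency[rule_format] assms(1,3,4) in
          \<open>auto simp: nontrivial_graph_def dest: token_edges_vertices\<close>)
    note connected = token_graph_connected[OF assms(1,2)]
    obtain A B A' B' where "token_edges V E k A B" "first_factor_edge A B"
      and "token_edges V E k A' B'" "\<not> first_factor_edge A' B'"
      using edges_of_both_factors[OF factors connected] .
    then show False
      using first_factor_edge_constant[OF connected incident_edges_same_factor[OF assms(2)]]
      by blast
  qed
  then show ?thesis
    unfolding prime_graph_def composite_graph_def graph_iso_def by blast
qed

end
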